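(* Let $G$ be a simple graph with $8$ nodes, $16$ edges and minimum degree $\delta(G)=2$. Then $m_k(K_{4,4})<m_k(G)$ for every $k\in\{5,6,7,8\}$.
   Context: For a graph $H$, $m_k(H)$ denotes the number of edge sets $C\subseteq E(H)$ with $|C|=k$ such that $H-C$ is disconnected (cutsets of cardinality $k$). $K_{4,4}$ is the complete bipartite graph with two parts of size $4$. *)

theory Defs
  imports Main
begin

definition simple_graph :: "'a set \<Rightarrow> 'a set set \<Rightarrow> bool" where
  "simple_graph V E \<longleftrightarrow> finite V \<and>
     (\<forall>e\<in>E. \<exists>u v. u \<in> V \<and> v \<in> V \<and> u \<noteq> v \<and> e = {u, v})"

definition degree :: "'a set set \<Rightarrow> 'a \<Rightarrow> nat" where
  "degree E v = card {e \<in> E. v \<in> e}"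

definition min_degree :: "'a set \<Rightarrow> 'a set set \<Rightarrow> nat" where
  "min_degree V E = Min (degree E ` V)"

definition adj :: "'a set set \<Rightarrow> ('a \<times> 'a) set" where
  "adj E = {(u, v). {u, v} \<in> E}"

definition graph_connected :: "'a set \<Rightarrow> 'a set set \<Rightarrow> bool" where
  "graph_connected V E \<longleftrightarrow> (\<forall>u\<in>V. \<forall>v\<in>V. (u, v) \<in> (adj E)\<^sup>*)"

definition cutset_count :: "'a set \<Rightarrow> 'a set set \<Rightarrow> nat \<Rightarrow> nat" where
  "cutset_count V E k = card {C. C \<subseteq> E \<and> card C = k \<and> \<not> graph_connected V (E - C)}"

definition K44_V :: "nat set" where
  "K44_V = {0..<8}"

definition K44_E :: "nat set set" where
  "K44_E = {{i, j} | i j. i < 4 \<and> 4 \<le> j \<and> j < 8}"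

end

theory Submission
  imports Defs
begin

text \<open>
  Removing an edge set C disconnects a graph exactly when C contains the edge boundary of a
  nonempty proper vertex set. In G, every k-set of edges containing all edges at a vertex of
  degree d is a cutset, and there are (16 - d choose k - d) of them: a vertex of degree 2 gives
  m_k(G) >= (14 choose k - 2), and for k = 8 the Bonferroni inequality over a few vertices of small
  degree gives m_8(G) > 4508, since the degrees are at least 2 and sum to 32.
  In K_{4,4}, an edge boundary with at most 7 edges is the star of a vertex (4 edges) or the
  boundary of an edge (6 edges); every other boundary has at least 8 edges. Hence
  m_k(K_{4,4}) <= 8 (12 choose k - 4) + 16 (9 choose k - 6) for k <= 7. For k = 8, the cutsets
  containing a star are counted exactly by inclusion-exclusion (3804, as no three stars fit into
  8 edges), and at most 2^7 cutsets are themselves boundaries, so m_8(K_{4,4}) <= 4508.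
\<close>

section \<open>Counting supersets\<close>

definition supersets :: "'a set \<Rightarrow> nat \<Rightarrow> 'a set \<Rightarrow> 'a set set" where
  "supersets E k S = {C. C \<subseteq> E \<and> card C = k \<and> S \<subseteq> C}"

text \<open>The guard matters: for s > k there are no supersets, whereas the truncated binomial
  coefficient would be 1.\<close>
definition supersets_count :: "nat \<Rightarrow> nat \<Rightarrow> nat \<Rightarrow> nat" where
  "supersets_count m k s = (if s \<le> k then (m - s) choose (k - s) else 0)"

lemma finite_supersets: "finite E \<Longrightarrow> finite (supersets E k S)"
  unfolding supersets_def by (rule finite_subset[of _ "Pow E"]) auto

lemma supersets_Int: "supersets E k S \<inter> supersets E k T = supersets E k (S \<union> T)"
  unfolding supersets_def by auto

lemma card_supersets:
  assumes "finite E" "S \<subseteq> E"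
  shows "card (supersets E k S) = supersets_count (card E) k (card S)"
proof (cases "card S \<le> k")
  case True
  have fin: "finite S" "\<And>C. C \<subseteq> E \<Longrightarrow> finite C" using assms finite_subset by auto
  have "bij_betw (\<lambda>D. D \<union> S) {D. D \<subseteq> E - S \<and> card D = k - card S} (supersets E k S)"
  proof (rule bij_betw_byWitness[where f' = "\<lambda>C. C - S"])
    show "(\<lambda>D. D \<union> S) ` {D. D \<subseteq> E - S \<and> card D = k - card S} \<subseteq> supersets E k S"
    proof (rule image_subsetI)
      fix D assume D: "D \<in> {D. D \<subseteq> E - S \<and> card D = k - card S}"
      then have "card (D \<union> S) = card D + card S" using fin by (intro card_Un_disjoint) auto
      then show "D \<union> S \<in> supersets E k S" using D True assms(2) by (auto simp: supersets_def)
    qed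
    show "(\<lambda>C. C - S) ` supersets E k S \<subseteq> {D. D \<subseteq> E - S \<and> card D = k - card S}"
      using fin by (auto simp: supersets_def card_Diff_subset)
  qed (auto simp: supersets_def)
  then have "card (supersets E k S) = card (E - S) choose (k - card S)"
    using assms(1) by (simp add: bij_betw_same_card[symmetric] n_subsets)
  then show ?thesis using True assms fin by (simp add: supersets_count_def card_Diff_subset)
next
  case False
  have "supersets E k S = {}"
    using False assms(1) by (auto simp: supersets_def dest: card_mono[OF finite_subset])
  then show ?thesis using False by (simp add: supersets_count_def)
qed

lemma supersets_count_antimono:
  assumes "s \<le> t" "t \<le> m"
  shows "supersets_count m k t \<le> supersets_count m k s"
proof -
  have "supersets {..<m} k {..<t} \<subseteq> supersets {..<m} k {..<s}"
    using assms(1) by (auto simp: supersets_def)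
  then have "card (supersets {..<m} k {..<t}) \<le> card (supersets {..<m} k {..<s})"
    by (intro card_mono finite_supersets) simp_all
  then show ?thesis using assms by (simp add: card_supersets)
qed

lemmas supersets_count_eval =
  supersets_count_def binomial_code fold_atLeastAtMost_nat.simps fact_numeral

section \<open>Bonferroni inequalities for lists of sets\<close>

fun pair_sum :: "('a \<Rightarrow> 'a \<Rightarrow> nat) \<Rightarrow> 'a list \<Rightarrow> nat" where
  "pair_sum f [] = 0"
| "pair_sum f (x # xs) = (\<Sum>y\<leftarrow>xs. f x y) + pair_sum f xs"

lemma pair_sum_mono:
  assumes "distinct L" "\<And>x y. x \<in> set L \<Longrightarrow> y \<in> set L \<Longrightarrow> x \<noteq> y \<Longrightarrow> f x y \<le> g x y"
  shows "pair_sum f L \<le> pair_sum g L"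
  using assms by (induction L) (auto intro!: add_mono sum_list_mono)

lemma pair_sum_cong:
  assumes "distinct L" "\<And>x y. x \<in> set L \<Longrightarrow> y \<in> set L \<Longrightarrow> x \<noteq> y \<Longrightarrow> f x y = g x y"
  shows "pair_sum f L = pair_sum g L"
  using pair_sum_mono[of L f g] pair_sum_mono[of L g f] assms by fastforce

lemma pair_sum_map: "pair_sum f (map h L) = pair_sum (\<lambda>x y. f (h x) (h y)) L"
  by (induction L) (simp_all add: comp_def)

lemma card_UN_list_le: "card (\<Union>x\<in>set L. A x) \<le> (\<Sum>x\<leftarrow>L. card (A x))"
  by (induction L) (auto intro: order_trans[OF card_Un_le])

lemma card_UN_list_ge:
  assumes "\<And>x. x \<in> set L \<Longrightarrow> finite (A x)"
  shows "(\<Sum>x\<leftarrow>L. card (A x)) \<le> card (\<Union>x\<in>set L. A x) + pair_sum (\<lambda>x y. card (A x \<inter> A y)) L"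
  using assms
proof (induction L)
  case (Cons x xs)
  let ?U = "\<Union>y\<in>set xs. A y"
  have "card (A x) + card ?U = card (A x \<union> ?U) + card (A x \<inter> ?U)"
    using Cons.prems by (intro card_Un_Int) auto
  moreover have "card (A x \<inter> ?U) \<le> (\<Sum>y\<leftarrow>xs. card (A x \<inter> A y))"
    unfolding Int_UN_distrib by (rule card_UN_list_le)
  moreover have "(\<Sum>y\<leftarrow>xs. card (A y)) \<le> card ?U + pair_sum (\<lambda>x y. card (A x \<inter> A y)) xs"
    by (rule Cons.IH) (simp add: Cons.prems)
  ultimately show ?case by simp
qed simp

lemma card_UN_list_eq:
  assumes "distinct L" "\<And>x. x \<in> set L \<Longrightarrow> finite (A x)"
    and "\<And>x y z. x \<in> set L \<Longrightarrow> y \<in> set L \<Longrightarrow> z \<in> set L \<Longrightarrow> distinct [x, y, z]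
           \<Longrightarrow> A x \<inter> A y \<inter> A z = {}"
  shows "card (\<Union>x\<in>set L. A x) + pair_sum (\<lambda>x y. card (A x \<inter> A y)) L = (\<Sum>x\<leftarrow>L. card (A x))"
  using assms
proof (induction L)
  case (Cons x xs)
  let ?U = "\<Union>y\<in>set xs. A y"
  have "card (A x) + card ?U = card (A x \<union> ?U) + card (A x \<inter> ?U)"
    using Cons.prems by (intro card_Un_Int) auto
  moreover have "card (A x \<inter> ?U) = (\<Sum>y\<in>set xs. card (A x \<inter> A y))"
    unfolding Int_UN_distrib
  proof (rule card_UN_disjoint)
    show "\<forall>y\<in>set xs. \<forall>z\<in>set xs. y \<noteq> z \<longrightarrow> (A x \<inter> A y) \<inter> (A x \<inter> A z) = {}"
    proof (intro ballI impI)
      fix y z assume "y \<in> set xs" "z \<in> set xs" "y \<noteq> z"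
      then have "A x \<inter> A y \<inter> A z = {}"
        using Cons.prems(1) by (intro Cons.prems(3)) auto
      then show "(A x \<inter> A y) \<inter> (A x \<inter> A z) = {}" by blast
    qed
  qed (use Cons.prems(2) in auto)
  moreover have "card ?U + pair_sum (\<lambda>x y. card (A x \<inter> A y)) xs = (\<Sum>y\<leftarrow>xs. card (A y))"
    using Cons.prems by (intro Cons.IH) auto
  ultimately show ?case using Cons.prems(1) by (simp add: sum_list_distinct_conv_sum_set)
qed simp

section \<open>Cutsets and edge boundaries\<close>

definition incident_edges :: "'a set set \<Rightarrow> 'a \<Rightarrow> 'a set set" where
  "incident_edges E x = {e \<in> E. x \<in> e}"

definition edge_boundary :: "'a set set \<Rightarrow> 'a set \<Rightarrow> 'a set set" where
  "edge_boundary E S = {e \<in> E. e \<inter> S \<noteq> {} \<and> \<not> e \<subseteq> S}"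

definition cutsets :: "'a set \<Rightarrow> 'a set set \<Rightarrow> nat \<Rightarrow> 'a set set set" where
  "cutsets V E k = {C. C \<subseteq> E \<and> card C = k \<and> \<not> graph_connected V (E - C)}"

lemma cutset_count_eq_card_cutsets: "cutset_count V E k = card (cutsets V E k)"
  unfolding cutset_count_def cutsets_def ..

lemma degree_eq_card_incident_edges: "degree E x = card (incident_edges E x)"
  unfolding degree_def incident_edges_def ..

lemma simple_graph_edgeE:
  assumes "simple_graph V E" "e \<in> E"
  obtains u v where "u \<in> V" "v \<in> V" "u \<noteq> v" "e = {u, v}"
  using assms unfolding simple_graph_def by blast

lemma simple_graph_edge_subset:
  assumes "simple_graph V E" "e \<in> E"
  shows "e \<subseteq> V"
proof -
  obtain u v where "u \<in> V" "v \<in> V" "e = {u, v}" using assms by (elim simple_graph_edgeE)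
  then show ?thesis by simp
qed

lemma simple_graph_finite_edges:
  assumes "simple_graph V E"
  shows "finite E"
proof (rule finite_subset)
  show "E \<subseteq> Pow V" using simple_graph_edge_subset[OF assms] by blast
  show "finite (Pow V)" using assms by (simp add: simple_graph_def)
qed

lemma finite_cutsets: "finite E \<Longrightarrow> finite (cutsets V E k)"
  unfolding cutsets_def by (rule finite_subset[of _ "Pow E"]) auto

lemma degree_sum:
  assumes "simple_graph V E"
  shows "(\<Sum>v\<in>V. degree E v) = 2 * card E"
proof -
  have fin: "finite V" "finite E"
    using assms simple_graph_finite_edges by (auto simp: simple_graph_def)
  have "(\<Sum>v\<in>V. degree E v) = (\<Sum>v\<in>V. \<Sum>e\<in>E. if v \<in> e then 1 else 0)"
    unfolding degree_def using fin by (simp add: sum.inter_filter[symmetric])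
  also have "\<dots> = (\<Sum>e\<in>E. \<Sum>v\<in>V. if v \<in> e then 1 else 0)"
    by (rule sum.swap)
  also have "\<dots> = (\<Sum>e\<in>E. 2)"
  proof (rule sum.cong[OF refl])
    fix e assume "e \<in> E"
    then obtain u v where uv: "u \<in> V" "v \<in> V" "u \<noteq> v" "e = {u, v}"
      using assms by (elim simple_graph_edgeE)
    then have "{w \<in> V. w \<in> e} = {u, v}" by auto
    then show "(\<Sum>w\<in>V. if w \<in> e then 1 else 0) = (2::nat)"
      using fin uv(3) by (simp add: sum.inter_filter[symmetric])
  qed
  finally show ?thesis by simp
qed

lemma min_degree_le: "finite V \<Longrightarrow> v \<in> V \<Longrightarrow> min_degree V E \<le> degree E v"
  unfolding min_degree_def by simp

lemma min_degree_attained: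
  assumes "finite V" "V \<noteq> {}"
  obtains v where "v \<in> V" "degree E v = min_degree V E"
proof -
  have "Min (degree E ` V) \<in> degree E ` V" using assms by (intro Min_in) auto
  then show ?thesis using that unfolding min_degree_def by auto
qed

lemma incident_edges_Int:
  assumes "simple_graph V E" "x \<noteq> y"
  shows "incident_edges E x \<inter> incident_edges E y = (if {x, y} \<in> E then {{x, y}} else {})"
proof -
  have "e = {x, y}" if "e \<in> E" "x \<in> e" "y \<in> e" for e
  proof -
    obtain u v where "e = {u, v}" using assms(1) \<open>e \<in> E\<close> by (elim simple_graph_edgeE)
    then show ?thesis using that assms(2) by auto
  qed
  then have "incident_edges E x \<inter> incident_edges E y \<subseteq> {{x, y}}"
    unfolding incident_edges_def by blast
  then show ?thesis unfolding incident_edges_def by auto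
qed

lemma card_incident_edges_Un:
  assumes "simple_graph V E" "x \<noteq> y"
  shows "card (incident_edges E x \<union> incident_edges E y)
           = degree E x + degree E y - (if {x, y} \<in> E then 1 else 0)"
proof -
  have "finite (incident_edges E z)" for z
    using simple_graph_finite_edges[OF assms(1)] by (simp add: incident_edges_def)
  then have "card (incident_edges E x \<union> incident_edges E y)
      + card (incident_edges E x \<inter> incident_edges E y) = degree E x + degree E y"
    unfolding degree_eq_card_incident_edges by (intro card_Un_Int[symmetric])
  then show ?thesis unfolding incident_edges_Int[OF assms] by (simp split: if_splits)
qed

lemma card_incident_edges_Un3_ge:
  assumes "simple_graph V E" "distinct [x, y, z]"
  shows "degree E x + degree E y + degree E z
           \<le> card (incident_edges E x \<union> incident_edges E y \<union> incident_edges E z) + 3"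
proof -
  let ?I = "incident_edges E"
  have fin: "finite (?I w)" for w
    using simple_graph_finite_edges[OF assms(1)] by (simp add: incident_edges_def)
  have one: "card (?I a \<inter> ?I b) \<le> 1" if "a \<noteq> b" for a b
    using incident_edges_Int[OF assms(1) that] by simp
  have "pair_sum (\<lambda>a b. card (?I a \<inter> ?I b)) [x, y, z] \<le> pair_sum (\<lambda>_ _. 1) [x, y, z]"
    using assms(2) by (rule pair_sum_mono) (rule one)
  then have "pair_sum (\<lambda>a b. card (?I a \<inter> ?I b)) [x, y, z] \<le> 3" by simp
  moreover have "(\<Sum>w\<leftarrow>[x, y, z]. card (?I w))
      \<le> card (\<Union>w\<in>set [x, y, z]. ?I w) + pair_sum (\<lambda>a b. card (?I a \<inter> ?I b)) [x, y, z]"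
    using fin by (rule card_UN_list_ge)
  ultimately show ?thesis by (simp add: degree_eq_card_incident_edges Un_assoc)
qed

lemma edge_boundary_singleton:
  assumes "simple_graph V E"
  shows "edge_boundary E {x} = incident_edges E x"
  using assms unfolding simple_graph_def edge_boundary_def incident_edges_def by fastforce

lemma edge_boundary_doubleton:
  assumes "simple_graph V E" "x \<noteq> y"
  shows "edge_boundary E {x, y} = incident_edges E x \<union> incident_edges E y - {{x, y}}"
  using assms unfolding simple_graph_def edge_boundary_def incident_edges_def
  by (auto simp: doubleton_eq_iff)

lemma edge_boundary_complement:
  assumes "simple_graph V E"
  shows "edge_boundary E (V - S) = edge_boundary E S"
  using simple_graph_edge_subset[OF assms] unfolding edge_boundary_def by auto

lemma reachable_stays_inside:
  assumes "(u, v) \<in> (adj (E - C))\<^sup>*" "u \<in> S" "edge_boundary E S \<subseteq> C"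
  shows "v \<in> S"
  using assms(1)
proof (induction rule: rtrancl_induct)
  case (step a b)
  then have "{a, b} \<in> E - C" by (simp add: adj_def)
  then show "b \<in> S" using step.IH assms(3) unfolding edge_boundary_def by auto
qed (rule assms(2))

lemma edge_boundary_reachable_subset:
  assumes "simple_graph V E"
  shows "edge_boundary E {x \<in> V. (u, x) \<in> (adj (E - C))\<^sup>*} \<subseteq> C"
    (is "edge_boundary E ?T \<subseteq> C")
proof
  fix e assume e: "e \<in> edge_boundary E ?T"
  then have "e \<in> E" by (simp add: edge_boundary_def)
  with assms obtain a b where ab: "a \<in> V" "b \<in> V" "e = {a, b}" by (elim simple_graph_edgeE)
  show "e \<in> C"
  proof (rule ccontr)
    assume "e \<notin> C"
    then have "(a, b) \<in> adj (E - C)" "(b, a) \<in> adj (E - C)"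
      using e ab(3) by (auto simp: adj_def edge_boundary_def insert_commute)
    then have "(u, a) \<in> (adj (E - C))\<^sup>* \<longleftrightarrow> (u, b) \<in> (adj (E - C))\<^sup>*"
      by (meson rtrancl_into_rtrancl)
    then have "a \<in> ?T \<longleftrightarrow> b \<in> ?T"
      using ab(1,2) by blast
    then show False using e ab(3) unfolding edge_boundary_def by auto
  qed
qed

lemma disconnected_iff_edge_boundary:
  assumes "simple_graph V E" "z \<in> V"
  shows "\<not> graph_connected V (E - C) \<longleftrightarrow> (\<exists>S. z \<in> S \<and> S \<subseteq> V \<and> S \<noteq> V \<and> edge_boundary E S \<subseteq> C)"
proof
  assume "\<not> graph_connected V (E - C)"
  then obtain u w where uw: "u \<in> V" "w \<in> V" "(u, w) \<notin> (adj (E - C))\<^sup>*"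
    unfolding graph_connected_def by blast
  define T where "T = {x \<in> V. (u, x) \<in> (adj (E - C))\<^sup>*}"
  have T: "u \<in> T" "w \<notin> T" "T \<subseteq> V" using uw by (auto simp: T_def)
  have bT: "edge_boundary E T \<subseteq> C"
    unfolding T_def by (rule edge_boundary_reachable_subset[OF assms(1)])
  show "\<exists>S. z \<in> S \<and> S \<subseteq> V \<and> S \<noteq> V \<and> edge_boundary E S \<subseteq> C"
  proof (cases "z \<in> T")
    case True
    moreover have "T \<noteq> V" using T(2) uw(2) by blast
    ultimately show ?thesis using T(3) bT by blast
  next
    case False
    have "z \<in> V - T" "V - T \<subseteq> V" "V - T \<noteq> V" using False assms(2) T(1,3) uw(1) by auto
    moreover have "edge_boundary E (V - T) \<subseteq> C"
      using bT edge_boundary_complement[OF assms(1)] by simp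
    ultimately show ?thesis by blast
  qed
next
  assume "\<exists>S. z \<in> S \<and> S \<subseteq> V \<and> S \<noteq> V \<and> edge_boundary E S \<subseteq> C"
  then obtain S y where S: "z \<in> S" "y \<in> V" "y \<notin> S" "edge_boundary E S \<subseteq> C" by blast
  show "\<not> graph_connected V (E - C)"
  proof
    assume "graph_connected V (E - C)"
    then have "(z, y) \<in> (adj (E - C))\<^sup>*"
      using assms(2) S(2) unfolding graph_connected_def by blast
    then have "y \<in> S" using S(1,4) by (rule reachable_stays_inside)
    then show False using S(3) by contradiction
  qed
qed

lemma card_edge_boundaries_le:
  assumes "finite V" "z \<in> V"
  shows "card (edge_boundary E ` {S. z \<in> S \<and> S \<subseteq> V}) \<le> 2 ^ (card V - 1)"
proof -
  have sub: "{S. z \<in> S \<and> S \<subseteq> V} \<subseteq> insert z ` Pow (V - {z})"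
  proof
    fix S assume "S \<in> {S. z \<in> S \<and> S \<subseteq> V}"
    then have "S = insert z (S - {z})" "S - {z} \<in> Pow (V - {z})" by auto
    then show "S \<in> insert z ` Pow (V - {z})" by blast
  qed
  have "card (edge_boundary E ` {S. z \<in> S \<and> S \<subseteq> V}) \<le> card {S. z \<in> S \<and> S \<subseteq> V}"
    using assms(1) by (intro card_image_le) simp
  also have "\<dots> \<le> card (insert z ` Pow (V - {z}))"
    using assms(1) sub by (intro card_mono) simp_all
  also have "\<dots> \<le> card (Pow (V - {z}))"
    using assms(1) by (intro card_image_le) simp
  also have "\<dots> = 2 ^ (card V - 1)"
    using assms by (simp add: card_Pow)
  finally show ?thesis .
qed

section \<open>Cutsets containing the star of a vertex\<close>

lemma card_supersets_incident_edges:
  assumes "finite E"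
  shows "card (supersets E k (incident_edges E x)) = supersets_count (card E) k (degree E x)"
  unfolding degree_eq_card_incident_edges using assms
  by (rule card_supersets) (auto simp: incident_edges_def)

lemma supersets_incident_edges_subset_cutsets:
  assumes "simple_graph V E" "x \<in> V" "y \<in> V" "x \<noteq> y"
  shows "supersets E k (incident_edges E x) \<subseteq> cutsets V E k"
proof
  fix C assume C: "C \<in> supersets E k (incident_edges E x)"
  have "x \<in> {x}" "{x} \<subseteq> V" "{x} \<noteq> V" using assms(2-4) by auto
  moreover have "edge_boundary E {x} \<subseteq> C"
    using C edge_boundary_singleton[OF assms(1)] by (simp add: supersets_def)
  ultimately have "\<exists>S. x \<in> S \<and> S \<subseteq> V \<and> S \<noteq> V \<and> edge_boundary E S \<subseteq> C" by blast
  then have "\<not> graph_connected V (E - C)"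
    by (simp only: disconnected_iff_edge_boundary[OF assms(1,2)])
  then show "C \<in> cutsets V E k" using C by (simp add: supersets_def cutsets_def)
qed

lemma card_supersets_incident_edges_Int_le:
  assumes "simple_graph V E" "x \<noteq> y"
  shows "card (supersets E k (incident_edges E x) \<inter> supersets E k (incident_edges E y))
           \<le> supersets_count (card E) k (degree E x + degree E y - 1)"
proof -
  let ?I = "incident_edges E x \<union> incident_edges E y"
  have fin: "finite E" using simple_graph_finite_edges[OF assms(1)] .
  have sub: "?I \<subseteq> E" by (auto simp: incident_edges_def)
  have "card (supersets E k (incident_edges E x) \<inter> supersets E k (incident_edges E y))
      = supersets_count (card E) k (card ?I)"
    unfolding supersets_Int using fin sub by (rule card_supersets)
  also have "\<dots> \<le> supersets_count (card E) k (degree E x + degree E y - 1)"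
  proof (rule supersets_count_antimono)
    show "degree E x + degree E y - 1 \<le> card ?I"
      using card_incident_edges_Un[OF assms] by simp
    show "card ?I \<le> card E" using fin sub by (rule card_mono)
  qed
  finally show ?thesis .
qed

lemma cutset_count_lower_bound:
  assumes "simple_graph V E" "2 \<le> card V" "distinct L" "set L \<subseteq> V"
  shows "(\<Sum>d\<leftarrow>map (degree E) L. supersets_count (card E) k d)
           \<le> cutset_count V E k
             + pair_sum (\<lambda>d d'. supersets_count (card E) k (d + d' - 1)) (map (degree E) L)"
proof -
  let ?A = "\<lambda>x. supersets E k (incident_edges E x)"
  have fin: "finite E" using simple_graph_finite_edges[OF assms(1)] .
  have bonferroni: "(\<Sum>x\<leftarrow>L. card (?A x))
      \<le> card (\<Union>x\<in>set L. ?A x) + pair_sum (\<lambda>x y. card (?A x \<inter> ?A y)) L"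
    using fin by (intro card_UN_list_ge finite_supersets)
  have "?A x \<subseteq> cutsets V E k" if "x \<in> V" for x
  proof -
    have "\<not> V \<subseteq> {x}"
    proof
      assume "V \<subseteq> {x}"
      then have "card V \<le> 1" using card_mono[of "{x}" V] by simp
      then show False using assms(2) by simp
    qed
    then obtain y where "y \<in> V" "x \<noteq> y" by blast
    then show ?thesis by (rule supersets_incident_edges_subset_cutsets[OF assms(1) that])
  qed
  then have "(\<Union>x\<in>set L. ?A x) \<subseteq> cutsets V E k" using assms(4) by blast
  then have union: "card (\<Union>x\<in>set L. ?A x) \<le> cutset_count V E k"
    unfolding cutset_count_eq_card_cutsets using fin by (intro card_mono finite_cutsets)
  have pairs: "pair_sum (\<lambda>x y. card (?A x \<inter> ?A y)) L
      \<le> pair_sum (\<lambda>x y. supersets_count (card E) k (degree E x + degree E y - 1)) L"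
    using assms(3) by (rule pair_sum_mono) (rule card_supersets_incident_edges_Int_le[OF assms(1)])
  have "(\<Sum>d\<leftarrow>map (degree E) L. supersets_count (card E) k d) = (\<Sum>x\<leftarrow>L. card (?A x))"
    by (simp add: comp_def card_supersets_incident_edges[OF fin])
  then show ?thesis using bonferroni union pairs unfolding pair_sum_map by linarith
qed

lemma five_card_le_sum_plus_small_values:
  fixes f :: "'a \<Rightarrow> nat"
  assumes "finite W" "\<And>w. w \<in> W \<Longrightarrow> 3 \<le> f w"
  shows "5 * card W \<le> sum f W + 2 * card {w \<in> W. f w = 3} + card {w \<in> W. f w = 4}"
proof -
  have "5 * card W = (\<Sum>w\<in>W. 5)" by simp
  also have "\<dots> \<le> (\<Sum>w\<in>W. f w + (if f w = 3 then 2 else 0) + (if f w = 4 then 1 else 0))"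
    using assms(2) by (intro sum_mono) force
  also have "\<dots> = sum f W + 2 * card {w \<in> W. f w = 3} + card {w \<in> W. f w = 4}"
    using assms(1) by (simp add: sum.distrib sum.inter_filter[symmetric])
  finally show ?thesis .
qed

lemma obtain_distinct_list:
  assumes "finite A" "n \<le> card A"
  obtains xs where "distinct xs" "length xs = n" "set xs \<subseteq> A"
proof -
  obtain ys where ys: "set ys = A" "distinct ys" using finite_distinct_list[OF assms(1)] by blast
  then have "length ys = card A" using distinct_card[of ys] by simp
  then show ?thesis
    using ys assms(2) set_take_subset[of n ys] by (intro that[of "take n ys"]) auto
qed

lemma many_vertices_of_degree_3_or_4:
  assumes "simple_graph V E" "card V = 8" "card E = 16" "v \<in> V" "degree E v = 2"
    and "\<And>w. w \<in> V - {v} \<Longrightarrow> 3 \<le> degree E w"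
  shows "5 \<le> 2 * card {w \<in> V - {v}. degree E w = 3} + card {w \<in> V - {v}. degree E w = 4}"
proof -
  have fin: "finite V" using assms(1) by (simp add: simple_graph_def)
  have "(\<Sum>w\<in>V. degree E w) = degree E v + (\<Sum>w\<in>V - {v}. degree E w)"
    using fin assms(4) by (rule sum.remove)
  then have "(\<Sum>w\<in>V - {v}. degree E w) = 30"
    using degree_sum[OF assms(1)] assms(3,5) by simp
  moreover have "5 * card (V - {v}) \<le> (\<Sum>w\<in>V - {v}. degree E w)
      + 2 * card {w \<in> V - {v}. degree E w = 3} + card {w \<in> V - {v}. degree E w = 4}"
    using fin assms(6) by (intro five_card_le_sum_plus_small_values) auto
  moreover have "card (V - {v}) = 7" using fin assms(2,4) by simp
  ultimately show ?thesis by linarith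
qed

lemma split_5_le_2_mul_add:
  fixes a b :: nat
  assumes "5 \<le> 2 * a + b"
  obtains n3 n4 where "n3 \<le> a" "n4 \<le> b" "(n3, n4) \<in> {(3, 0), (2, 1), (1, 3), (0, 5)}"
proof -
  consider "3 \<le> a" | "a = 2" "1 \<le> b" | "a = 1" "3 \<le> b" | "a = 0" "5 \<le> b"
    using assms by linarith
  then show ?thesis
  proof cases
    case 1
    then show ?thesis by (intro that[of 3 0]) simp_all
  next
    case 2
    then show ?thesis by (intro that[of 2 1]) simp_all
  next
    case 3
    then show ?thesis by (intro that[of 1 3]) simp_all
  next
    case 4
    then show ?thesis by (intro that[of 0 5]) simp_all
  qed
qed

text \<open>Either a second vertex has degree 2, or the other seven degrees are at least 3 and sum to
  30, which leaves enough vertices of degree 3 or 4.\<close>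
lemma degree_pattern_8_16:
  assumes "simple_graph V E" "card V = 8" "card E = 16" "min_degree V E = 2"
  obtains L where "distinct L" "set L \<subseteq> V"
    "map (degree E) L \<in> {[2, 2], [2, 3, 3, 3], [2, 3, 3, 4], [2, 3, 4, 4, 4], [2, 4, 4, 4, 4, 4]}"
proof -
  have fin: "finite V" using assms(1) by (simp add: simple_graph_def)
  have "V \<noteq> {}" using assms(2) by auto
  then obtain v where "v \<in> V" "degree E v = min_degree V E"
    using fin by (elim min_degree_attained)
  then have v: "v \<in> V" "degree E v = 2" using assms(4) by simp_all
  have ge2: "2 \<le> degree E w" if "w \<in> V" for w
    using min_degree_le[OF fin that, of E] assms(4) by simp
  show ?thesis
  proof (cases "\<exists>w\<in>V - {v}. degree E w = 2")
    case True
    then obtain w where "w \<in> V" "w \<noteq> v" "degree E w = 2" by blast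
    then show ?thesis using v by (intro that[of "[v, w]"]) auto
  next
    case False
    define D3 where "D3 = {w \<in> V - {v}. degree E w = 3}"
    define D4 where "D4 = {w \<in> V - {v}. degree E w = 4}"
    have "3 \<le> degree E w" if "w \<in> V - {v}" for w
      using ge2[of w] False that by force
    then have "5 \<le> 2 * card D3 + card D4"
      unfolding D3_def D4_def by (rule many_vertices_of_degree_3_or_4[OF assms(1-3) v])
    then obtain n3 n4 where n: "n3 \<le> card D3" "n4 \<le> card D4"
      "(n3, n4) \<in> {(3, 0), (2, 1), (1, 3), (0, 5)}"
      by (rule split_5_le_2_mul_add)
    have fin34: "finite D3" "finite D4" using fin by (simp_all add: D3_def D4_def)
    obtain xs3 where xs3: "distinct xs3" "length xs3 = n3" "set xs3 \<subseteq> D3"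
      by (rule obtain_distinct_list[OF fin34(1) n(1)])
    obtain xs4 where xs4: "distinct xs4" "length xs4 = n4" "set xs4 \<subseteq> D4"
      by (rule obtain_distinct_list[OF fin34(2) n(2)])
    have "D3 \<inter> D4 = {}" "v \<notin> D3 \<union> D4" "D3 \<union> D4 \<subseteq> V" by (auto simp: D3_def D4_def)
    then have L: "distinct (v # xs3 @ xs4)" "set (v # xs3 @ xs4) \<subseteq> V"
      using xs3 xs4 v(1) by auto
    have "map (degree E) xs3 = replicate n3 3" "map (degree E) xs4 = replicate n4 4"
      using xs3 xs4 by (auto intro!: replicate_eqI simp: D3_def D4_def)
    then have "map (degree E) (v # xs3 @ xs4) = 2 # replicate n3 3 @ replicate n4 4"
      using v(2) by simp
    also have "\<dots> \<in> {[2, 2], [2, 3, 3, 3], [2, 3, 3, 4], [2, 3, 4, 4, 4], [2, 4, 4, 4, 4, 4]}"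
      using n(3) by (auto simp: numeral_eq_Suc)
    finally show ?thesis using L by (intro that)
  qed
qed

lemma cutset_count_ge_min_degree:
  assumes "simple_graph V E" "2 \<le> card V"
  shows "supersets_count (card E) k (min_degree V E) \<le> cutset_count V E k"
proof -
  have "finite V" using assms(1) by (simp add: simple_graph_def)
  moreover have "V \<noteq> {}" using assms(2) by auto
  ultimately obtain v where "v \<in> V" "degree E v = min_degree V E"
    by (elim min_degree_attained)
  then show ?thesis using cutset_count_lower_bound[OF assms, of "[v]" k] by simp
qed

lemma cutset_count_8_16_gt_4508:
  assumes "simple_graph V E" "card V = 8" "card E = 16" "min_degree V E = 2"
  shows "4508 < cutset_count V E 8"
proof -
  obtain L where L: "distinct L" "set L \<subseteq> V"
    and ds: "map (degree E) L \<in> {[2, 2], [2, 3, 3, 3], [2, 3, 3, 4], [2, 3, 4, 4, 4], [2, 4, 4, 4, 4, 4]}"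
    using degree_pattern_8_16[OF assms] by blast
  have "(\<Sum>d\<leftarrow>map (degree E) L. supersets_count 16 8 d)
      \<le> cutset_count V E 8 + pair_sum (\<lambda>d d'. supersets_count 16 8 (d + d' - 1)) (map (degree E) L)"
    using cutset_count_lower_bound[OF assms(1) _ L, of 8] assms(2,3) by simp
  moreover have "4508 + pair_sum (\<lambda>d d'. supersets_count 16 8 (d + d' - 1)) ds
      < (\<Sum>d\<leftarrow>ds. supersets_count 16 8 d)"
    if "ds \<in> {[2, 2], [2, 3, 3, 3], [2, 3, 3, 4], [2, 3, 4, 4, 4], [2, 4, 4, 4, 4, 4]}" for ds
    using that by (auto simp: supersets_count_eval)
  ultimately show ?thesis using ds by fastforce
qed

section \<open>The cutsets of K_{4,4}\<close>

lemma K44_E_eq_image: "K44_E = (\<lambda>(i, j). {i, j}) ` ({0..<4} \<times> {4..<8})"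
  unfolding K44_E_def by (auto simp: image_iff) blast

lemma inj_on_K44_pairs: "inj_on (\<lambda>(i::nat, j). {i, j}) ({0..<4} \<times> {4..<8})"
  unfolding inj_on_def by (auto simp: doubleton_eq_iff)

lemma card_K44_E: "card K44_E = 16"
  unfolding K44_E_eq_image by (simp add: card_image[OF inj_on_K44_pairs])

lemma finite_K44_E: "finite K44_E"
  unfolding K44_E_eq_image by simp

lemma simple_graph_K44: "simple_graph K44_V K44_E"
proof -
  have "\<exists>u v. u \<in> K44_V \<and> v \<in> K44_V \<and> u \<noteq> v \<and> e = {u, v}" if e: "e \<in> K44_E" for e
  proof -
    obtain i j where "i < 4" "4 \<le> j" "j < 8" "e = {i, j}" using e unfolding K44_E_def by blast
    then show ?thesis unfolding K44_V_def by (intro exI[of _ i] exI[of _ j]) auto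
  qed
  then show ?thesis unfolding simple_graph_def by (simp add: K44_V_def)
qed

lemma K44_edge_iff:
  assumes "i < 8" "j < 8"
  shows "{i, j} \<in> K44_E \<longleftrightarrow> (i < 4 \<longleftrightarrow> 4 \<le> j)"
proof
  assume "{i, j} \<in> K44_E"
  then obtain a b where "a < 4" "4 \<le> b" "{i, j} = {a, b}" unfolding K44_E_def by blast
  then show "i < 4 \<longleftrightarrow> 4 \<le> j" by (auto simp: doubleton_eq_iff)
next
  assume "i < 4 \<longleftrightarrow> 4 \<le> j"
  then consider "i < 4" "4 \<le> j" | "j < 4" "4 \<le> i" by linarith
  then show "{i, j} \<in> K44_E"
  proof cases
    case 1
    then show ?thesis using assms unfolding K44_E_def by blast
  next
    case 2
    moreover have "{i, j} = {j, i}" by blast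
    ultimately show ?thesis using assms unfolding K44_E_def by blast
  qed
qed

lemma K44_edge_boundary_eq:
  "edge_boundary K44_E S
     = (\<lambda>(i, j). {i, j}) ` ((S \<inter> {0..<4}) \<times> ({4..<8} - S) \<union> ({0..<4} - S) \<times> (S \<inter> {4..<8}))"
  unfolding edge_boundary_def K44_E_eq_image by auto

lemma card_K44_edge_boundary:
  "card (edge_boundary K44_E S)
     = card (S \<inter> {0..<4}) * (4 - card (S \<inter> {4..<8})) + (4 - card (S \<inter> {0..<4})) * card (S \<inter> {4..<8})"
proof -
  let ?P = "(S \<inter> {0..<4}) \<times> ({4..<8} - S)" and ?Q = "({0..<4} - S) \<times> (S \<inter> {4..<8})"
  have "inj_on (\<lambda>(i, j). {i, j}) (?P \<union> ?Q)"
    by (rule inj_on_subset[OF inj_on_K44_pairs]) auto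
  then have "card (edge_boundary K44_E S) = card (?P \<union> ?Q)"
    unfolding K44_edge_boundary_eq by (rule card_image)
  also have "\<dots> = card ?P + card ?Q"
    by (rule card_Un_disjoint) auto
  moreover have "{4..<8::nat} - S = {4..<8} - (S \<inter> {4..<8})" "{0..<4::nat} - S = {0..<4} - (S \<inter> {0..<4})"
    by auto
  then have "card ({4..<8::nat} - S) = 4 - card (S \<inter> {4..<8})"
    "card ({0..<4::nat} - S) = 4 - card (S \<inter> {0..<4})"
    by (simp_all add: card_Diff_subset)
  ultimately show ?thesis by (simp add: card_cartesian_product)
qed

lemma K44_degree: "w \<in> K44_V \<Longrightarrow> degree K44_E w = 4"
  using card_K44_edge_boundary[of "{w}"]
  by (cases "w < 4") (auto simp: K44_V_def degree_eq_card_incident_edges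
      edge_boundary_singleton[OF simple_graph_K44])

lemma K44_boundary_size_cases:
  fixes a b :: nat
  assumes "a \<le> 4" "b \<le> 4" "a * (4 - b) + (4 - a) * b \<le> 7"
  shows "a \<le> 1 \<and> b \<le> 1 \<or> 3 \<le> a \<and> 3 \<le> b"
proof -
  have "a \<in> {0, 1, 2, 3, 4}" "b \<in> {0, 1, 2, 3, 4}" using assms(1,2) by auto
  then show ?thesis using assms(3) by auto
qed

lemma card_le_1_cases:
  assumes "finite X" "card X \<le> 1"
  shows "X = {} \<or> (\<exists>x. X = {x})"
proof (cases "X = {}")
  case False
  then have "card X = 1" using assms by (simp add: card_gt_0_iff le_antisym Suc_le_eq)
  then obtain x where "X = {x}" by (rule card_1_singletonE)
  then show ?thesis by blast
qed simp

lemma K44_sparse_vertex_set: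
  assumes "S \<subseteq> K44_V" "S \<noteq> {}" "card (S \<inter> {0..<4}) \<le> 1" "card (S \<inter> {4..<8}) \<le> 1"
  shows "(\<exists>w\<in>K44_V. S = {w}) \<or> (\<exists>u<4. \<exists>w. 4 \<le> w \<and> w < 8 \<and> S = {u, w})"
proof -
  have S: "S = (S \<inter> {0..<4}) \<union> (S \<inter> {4..<8})" using assms(1) by (auto simp: K44_V_def)
  have "S \<inter> {0..<4} = {} \<or> (\<exists>u. S \<inter> {0..<4} = {u})"
    using assms(3) by (intro card_le_1_cases) simp_all
  moreover have "S \<inter> {4..<8} = {} \<or> (\<exists>w. S \<inter> {4..<8} = {w})"
    using assms(4) by (intro card_le_1_cases) simp_all
  ultimately show ?thesis
  proof (elim disjE exE)
    assume "S \<inter> {0..<4} = {}" "S \<inter> {4..<8} = {}"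
    then show ?thesis using S assms(2) by simp
  next
    fix u assume u: "S \<inter> {0..<4} = {u}" and w: "S \<inter> {4..<8} = {}"
    have "u \<in> S \<inter> {0..<4}" using u by simp
    then have "u < 4" by simp
    then show ?thesis using S[unfolded u w] by (simp add: K44_V_def)
  next
    fix w assume u: "S \<inter> {0..<4} = {}" and w: "S \<inter> {4..<8} = {w}"
    have "w \<in> S \<inter> {4..<8}" using w by simp
    then have "w < 8" by simp
    then show ?thesis using S[unfolded u w] by (simp add: K44_V_def)
  next
    fix u w assume u: "S \<inter> {0..<4} = {u}" and w: "S \<inter> {4..<8} = {w}"
    have "u \<in> S \<inter> {0..<4}" "w \<in> S \<inter> {4..<8}" using u w by simp_all
    then have "u < 4" "4 \<le> w" "w < 8" by simp_all
    then show ?thesis using S[unfolded u w] by auto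
  qed
qed

lemma K44_small_boundary_sparse_side:
  assumes "S \<subseteq> K44_V" "S \<noteq> {}" "S \<noteq> K44_V" "card (edge_boundary K44_E S) \<le> 7"
  obtains T where "T \<subseteq> K44_V" "T \<noteq> {}" "card (T \<inter> {0..<4}) \<le> 1" "card (T \<inter> {4..<8}) \<le> 1"
    "edge_boundary K44_E T = edge_boundary K44_E S"
proof -
  let ?a = "card (S \<inter> {0..<4})" and ?b = "card (S \<inter> {4..<8})"
  have "?a \<le> card {0..<4::nat}" "?b \<le> card {4..<8::nat}" by (intro card_mono; simp)+
  then have "?a \<le> 1 \<and> ?b \<le> 1 \<or> 3 \<le> ?a \<and> 3 \<le> ?b"
    using assms(4) by (intro K44_boundary_size_cases) (simp_all add: card_K44_edge_boundary)
  then show ?thesis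
  proof
    assume "?a \<le> 1 \<and> ?b \<le> 1"
    then show ?thesis using assms(1,2) by (intro that[of S]) simp_all
  next
    assume small_complement: "3 \<le> ?a \<and> 3 \<le> ?b"
    have "(K44_V - S) \<inter> {0..<4} = {0..<4} - (S \<inter> {0..<4})"
      "(K44_V - S) \<inter> {4..<8} = {4..<8} - (S \<inter> {4..<8})"
      by (auto simp: K44_V_def)
    then have "card ((K44_V - S) \<inter> {0..<4}) = 4 - ?a" "card ((K44_V - S) \<inter> {4..<8}) = 4 - ?b"
      by (simp_all add: card_Diff_subset)
    then have "card ((K44_V - S) \<inter> {0..<4}) \<le> 1" "card ((K44_V - S) \<inter> {4..<8}) \<le> 1"
      using small_complement by linarith+
    moreover have "K44_V - S \<noteq> {}" using assms(1,3) by blast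
    ultimately show ?thesis
      using edge_boundary_complement[OF simple_graph_K44] by (intro that[of "K44_V - S"]) auto
  qed
qed

lemma K44_small_edge_boundary:
  assumes "S \<subseteq> K44_V" "S \<noteq> {}" "S \<noteq> K44_V" "card (edge_boundary K44_E S) \<le> 7"
  shows "(\<exists>w\<in>K44_V. edge_boundary K44_E S = incident_edges K44_E w)
       \<or> (\<exists>u<4. \<exists>w. 4 \<le> w \<and> w < 8
            \<and> edge_boundary K44_E S = incident_edges K44_E u \<union> incident_edges K44_E w - {{u, w}})"
proof -
  obtain T where T: "T \<subseteq> K44_V" "T \<noteq> {}" "card (T \<inter> {0..<4}) \<le> 1" "card (T \<inter> {4..<8}) \<le> 1"
    and boundary_T: "edge_boundary K44_E T = edge_boundary K44_E S"
    by (rule K44_small_boundary_sparse_side[OF assms])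
  from K44_sparse_vertex_set[OF T] show ?thesis
  proof (elim disjE bexE exE conjE)
    fix w assume w: "w \<in> K44_V" and T_eq: "T = {w}"
    have "edge_boundary K44_E S = incident_edges K44_E w"
      using boundary_T edge_boundary_singleton[OF simple_graph_K44] unfolding T_eq by simp
    then show ?thesis using w by blast
  next
    fix u w assume uw: "u < 4" "4 \<le> w" "w < 8" and T_eq: "T = {u, w}"
    have "u \<noteq> w" using uw by simp
    then have "edge_boundary K44_E S = incident_edges K44_E u \<union> incident_edges K44_E w - {{u, w}}"
      using boundary_T edge_boundary_doubleton[OF simple_graph_K44] unfolding T_eq by simp
    then show ?thesis using uw by blast
  qed
qed

definition K44_vertex_cuts :: "nat \<Rightarrow> nat set set set" where
  "K44_vertex_cuts k = (\<Union>w\<in>K44_V. supersets K44_E k (incident_edges K44_E w))"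

text \<open>A cutset containing the boundary of an edge {u, w} and the edge itself contains the star
  of u, so it is already a vertex cut; excluding the edge is what makes the count small enough
  for k = 8.\<close>
definition K44_edge_cuts :: "nat \<Rightarrow> nat set set set" where
  "K44_edge_cuts k = (\<Union>(u, w)\<in>{0..<4} \<times> {4..<8}.
     supersets (K44_E - {{u, w}}) k (incident_edges K44_E u \<union> incident_edges K44_E w - {{u, w}}))"

lemma K44_small_cut_covered:
  assumes "C \<subseteq> K44_E" "card C = k" "S \<subseteq> K44_V" "S \<noteq> {}" "S \<noteq> K44_V"
    "edge_boundary K44_E S \<subseteq> C" "card (edge_boundary K44_E S) \<le> 7"
  shows "C \<in> K44_vertex_cuts k \<union> K44_edge_cuts k"
  using K44_small_edge_boundary[OF assms(3-5,7)]
proof (elim disjE bexE exE conjE)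
  fix w assume "w \<in> K44_V" "edge_boundary K44_E S = incident_edges K44_E w"
  then show ?thesis using assms(1,2,6) unfolding K44_vertex_cuts_def supersets_def by auto
next
  fix u w assume uw: "u < 4" "4 \<le> w" "w < 8"
    and boundary: "edge_boundary K44_E S = incident_edges K44_E u \<union> incident_edges K44_E w - {{u, w}}"
  show ?thesis
  proof (cases "{u, w} \<in> C")
    case True
    then have "incident_edges K44_E u \<subseteq> C" using assms(6) boundary by blast
    moreover have "u \<in> K44_V" using uw by (simp add: K44_V_def)
    ultimately show ?thesis using assms(1,2) unfolding K44_vertex_cuts_def supersets_def by auto
  next
    case False
    then have "C \<in> supersets (K44_E - {{u, w}}) k
        (incident_edges K44_E u \<union> incident_edges K44_E w - {{u, w}})"
      using assms(1,2,6) boundary unfolding supersets_def by auto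
    then have "C \<in> K44_edge_cuts k"
      using uw unfolding K44_edge_cuts_def by (intro UN_I[of "(u, w)"]) simp_all
    then show ?thesis by blast
  qed
qed

lemma K44_cutsets_subset:
  assumes "k \<le> 8"
  shows "cutsets K44_V K44_E k \<subseteq> K44_vertex_cuts k \<union> K44_edge_cuts k
           \<union> (if k = 8 then edge_boundary K44_E ` {S. 0 \<in> S \<and> S \<subseteq> K44_V} else {})"
proof
  fix C assume "C \<in> cutsets K44_V K44_E k"
  then have C: "C \<subseteq> K44_E" "card C = k" "\<not> graph_connected K44_V (K44_E - C)"
    unfolding cutsets_def by auto
  then obtain S where S: "0 \<in> S" "S \<subseteq> K44_V" "S \<noteq> K44_V" "edge_boundary K44_E S \<subseteq> C"
    using disconnected_iff_edge_boundary[OF simple_graph_K44, of 0 C] by (auto simp: K44_V_def)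
  have "finite C" using C(1) finite_K44_E by (rule finite_subset)
  then have "card (edge_boundary K44_E S) \<le> k" using S(4) C(2) card_mono by blast
  show "C \<in> K44_vertex_cuts k \<union> K44_edge_cuts k
      \<union> (if k = 8 then edge_boundary K44_E ` {S. 0 \<in> S \<and> S \<subseteq> K44_V} else {})"
  proof (cases "card (edge_boundary K44_E S) \<le> 7")
    case True
    then show ?thesis using K44_small_cut_covered[OF C(1,2) S(2) _ S(3,4)] S(1) by blast
  next
    case False
    then have "k = 8" "card (edge_boundary K44_E S) = card C"
      using \<open>card (edge_boundary K44_E S) \<le> k\<close> assms C(2) by auto
    then have "k = 8" "edge_boundary K44_E S = C"
      using card_subset_eq[OF \<open>finite C\<close> S(4)] by auto
    then show ?thesis using S(1,2) by auto
  qed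
qed

lemma card_K44_vertex_cuts_le: "card (K44_vertex_cuts k) \<le> 8 * supersets_count 16 k 4"
proof -
  have "card (K44_vertex_cuts k) \<le> (\<Sum>w\<in>K44_V. card (supersets K44_E k (incident_edges K44_E w)))"
    unfolding K44_vertex_cuts_def by (rule card_UN_le) (simp add: K44_V_def)
  also have "\<dots> = (\<Sum>w\<in>K44_V. supersets_count 16 k 4)"
    by (rule sum.cong[OF refl])
      (simp add: card_supersets_incident_edges[OF finite_K44_E] card_K44_E K44_degree)
  also have "\<dots> = 8 * supersets_count 16 k 4" by (simp add: K44_V_def)
  finally show ?thesis .
qed

lemma card_K44_star_supersets_Int:
  assumes "x \<in> K44_V" "y \<in> K44_V" "x \<noteq> y"
  shows "card (supersets K44_E 8 (incident_edges K44_E x) \<inter> supersets K44_E 8 (incident_edges K44_E y))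
           = (if x < 4 \<longleftrightarrow> y < 4 then 1 else 9)"
proof -
  let ?I = "incident_edges K44_E"
  have "card (?I x \<union> ?I y) = (if x < 4 \<longleftrightarrow> y < 4 then 8 else 7)"
    using card_incident_edges_Un[OF simple_graph_K44 assms(3)] K44_edge_iff[of x y] assms
    by (auto simp: K44_degree K44_V_def)
  moreover have "card (supersets K44_E 8 (?I x) \<inter> supersets K44_E 8 (?I y))
      = supersets_count 16 8 (card (?I x \<union> ?I y))"
    unfolding supersets_Int card_K44_E[symmetric] using finite_K44_E
    by (rule card_supersets) (auto simp: incident_edges_def)
  ultimately show ?thesis by (simp add: supersets_count_eval)
qed

lemma K44_star_supersets_Int3_empty:
  assumes "x \<in> K44_V" "y \<in> K44_V" "z \<in> K44_V" "distinct [x, y, z]"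
  shows "supersets K44_E 8 (incident_edges K44_E x) \<inter> supersets K44_E 8 (incident_edges K44_E y)
           \<inter> supersets K44_E 8 (incident_edges K44_E z) = {}"
proof -
  let ?I = "incident_edges K44_E"
  have big: "9 \<le> card (?I x \<union> ?I y \<union> ?I z)"
    using card_incident_edges_Un3_ge[OF simple_graph_K44 assms(4)] assms(1-3) by (simp add: K44_degree)
  have "\<not> ?I x \<union> ?I y \<union> ?I z \<subseteq> C" if "C \<subseteq> K44_E" "card C = 8" for C
  proof
    assume "?I x \<union> ?I y \<union> ?I z \<subseteq> C"
    with finite_subset[OF that(1) finite_K44_E] have "card (?I x \<union> ?I y \<union> ?I z) \<le> card C"
      by (rule card_mono)
    then show False using big that(2) by simp
  qed
  then show ?thesis unfolding supersets_Int supersets_def by blast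
qed

lemma card_K44_vertex_cuts_8: "card (K44_vertex_cuts 8) = 3804"
proof -
  let ?A = "\<lambda>w. supersets K44_E 8 (incident_edges K44_E w)"
  let ?L = "[0, 1, 2, 3, 4, 5, 6, 7 :: nat]"
  have L: "set ?L = K44_V" by (auto simp: K44_V_def)
  have "card (\<Union>w\<in>set ?L. ?A w) + pair_sum (\<lambda>x y. card (?A x \<inter> ?A y)) ?L = (\<Sum>w\<leftarrow>?L. card (?A w))"
    using finite_K44_E K44_star_supersets_Int3_empty L by (intro card_UN_list_eq finite_supersets) auto
  moreover have "pair_sum (\<lambda>x y. card (?A x \<inter> ?A y)) ?L
      = pair_sum (\<lambda>x y. if x < 4 \<longleftrightarrow> y < 4 then 1 else 9) ?L"
  proof (rule pair_sum_cong)
    fix x y assume "x \<in> set ?L" "y \<in> set ?L" "x \<noteq> y"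
    then show "card (?A x \<inter> ?A y) = (if x < 4 \<longleftrightarrow> y < 4 then 1 else 9)"
      using L by (intro card_K44_star_supersets_Int) auto
  qed simp
  moreover have "card (?A w) = 495" if "w < 8" for w
  proof -
    have "degree K44_E w = 4" using that by (simp add: K44_degree K44_V_def)
    then show ?thesis
      by (simp add: card_supersets_incident_edges[OF finite_K44_E] card_K44_E supersets_count_eval)
  qed
  ultimately show ?thesis unfolding K44_vertex_cuts_def L[symmetric] by simp
qed

lemma card_K44_edge_cuts_le: "card (K44_edge_cuts k) \<le> 16 * supersets_count 15 k 6"
proof -
  let ?I = "incident_edges K44_E"
  have card_pair: "card (supersets (K44_E - {{u, w}}) k (?I u \<union> ?I w - {{u, w}}))
      = supersets_count 15 k 6" if "(u, w) \<in> {0..<4} \<times> {4..<8}" for u w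
  proof -
    have uw: "u \<in> K44_V" "w \<in> K44_V" "u \<noteq> w" "{u, w} \<in> K44_E"
      using that K44_edge_iff[of u w] by (auto simp: K44_V_def)
    then have "card (?I u \<union> ?I w) = 7"
      using card_incident_edges_Un[OF simple_graph_K44 uw(3)] by (simp add: K44_degree)
    moreover have "{u, w} \<in> ?I u \<union> ?I w" using uw(4) by (simp add: incident_edges_def)
    moreover have "finite (?I u \<union> ?I w)" using finite_K44_E by (simp add: incident_edges_def)
    ultimately have "card (?I u \<union> ?I w - {{u, w}}) = 6" by simp
    moreover have "card (K44_E - {{u, w}}) = 15" using uw(4) finite_K44_E card_K44_E by simp
    moreover have "?I u \<union> ?I w - {{u, w}} \<subseteq> K44_E - {{u, w}}" by (auto simp: incident_edges_def)
    ultimately show ?thesis using finite_K44_E by (simp add: card_supersets)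
  qed
  have "card (K44_edge_cuts k) \<le> (\<Sum>p\<in>{0..<4::nat} \<times> {4..<8::nat}.
      card ((\<lambda>(u, w). supersets (K44_E - {{u, w}}) k (?I u \<union> ?I w - {{u, w}})) p))"
    unfolding K44_edge_cuts_def by (rule card_UN_le) simp
  also have "\<dots> = (\<Sum>p\<in>{0..<4::nat} \<times> {4..<8::nat}. supersets_count 15 k 6)"
    by (rule sum.cong[OF refl]) (auto simp: card_pair)
  also have "\<dots> = 16 * supersets_count 15 k 6" by simp
  finally show ?thesis .
qed

lemma cutset_count_K44_le:
  assumes "k \<le> 8"
  shows "cutset_count K44_V K44_E k
           \<le> card (K44_vertex_cuts k) + 16 * supersets_count 15 k 6 + (if k = 8 then 128 else 0)"
proof -
  let ?B = "if k = 8 then edge_boundary K44_E ` {S. 0 \<in> S \<and> S \<subseteq> K44_V} else {}"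
  have "K44_vertex_cuts k \<subseteq> Pow K44_E" "K44_edge_cuts k \<subseteq> Pow K44_E"
    unfolding K44_vertex_cuts_def K44_edge_cuts_def supersets_def by auto
  moreover have "finite {S. 0 \<in> S \<and> S \<subseteq> K44_V}" by (simp add: K44_V_def)
  ultimately have fin: "finite (K44_vertex_cuts k \<union> K44_edge_cuts k \<union> ?B)"
    using finite_K44_E by (auto intro: finite_subset)
  have "card (edge_boundary K44_E ` {S. 0 \<in> S \<and> S \<subseteq> K44_V}) \<le> 2 ^ (card K44_V - 1)"
    by (rule card_edge_boundaries_le) (simp_all add: K44_V_def)
  then have "card ?B \<le> (if k = 8 then 128 else 0)" by (simp add: K44_V_def)
  moreover have "cutset_count K44_V K44_E k \<le> card (K44_vertex_cuts k \<union> K44_edge_cuts k \<union> ?B)"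
    unfolding cutset_count_eq_card_cutsets using fin K44_cutsets_subset[OF assms] by (rule card_mono)
  moreover have "card (K44_vertex_cuts k \<union> K44_edge_cuts k \<union> ?B)
      \<le> card (K44_vertex_cuts k) + card (K44_edge_cuts k) + card ?B"
    by (meson add_le_mono card_Un_le le_refl order_trans)
  ultimately show ?thesis using card_K44_edge_cuts_le[of k] by linarith
qed

lemma cutset_count_K44_lt:
  assumes "k \<in> {5, 6, 7}"
  shows "cutset_count K44_V K44_E k < supersets_count 16 k 2"
proof -
  have "k = 5 \<or> k = 6 \<or> k = 7" using assms by simp
  then have "8 * supersets_count 16 k 4 + 16 * supersets_count 15 k 6 < supersets_count 16 k 2"
    by (elim disjE) (simp_all add: supersets_count_eval)
  moreover have "cutset_count K44_V K44_E k \<le> card (K44_vertex_cuts k) + 16 * supersets_count 15 k 6"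
    using cutset_count_K44_le[of k] assms by auto
  ultimately show ?thesis using card_K44_vertex_cuts_le[of k] by linarith
qed

lemma cutset_count_K44_8: "cutset_count K44_V K44_E 8 \<le> 4508"
  using cutset_count_K44_le[of 8] by (simp add: card_K44_vertex_cuts_8 supersets_count_eval)

theorem mainTheorem5:
  fixes V :: "'a set" and E :: "'a set set" and k :: nat
  assumes "simple_graph V E"
    and "card V = 8"
    and "card E = 16"
    and "min_degree V E = 2"
    and "k \<in> {5, 6, 7, 8}"
  shows "cutset_count K44_V K44_E k < cutset_count V E k"
proof -
  consider "k \<in> {5, 6, 7}" | "k = 8" using assms(5) by blast
  then show ?thesis
  proof cases
    case 1
    have "supersets_count 16 k 2 \<le> cutset_count V E k"
      using cutset_count_ge_min_degree[OF assms(1), of k] assms(2-4) by simp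
    then show ?thesis using cutset_count_K44_lt[OF 1] by linarith
  next
    case 2
    then show ?thesis using cutset_count_K44_8 cutset_count_8_16_gt_4508[OF assms(1-4)] by simp
  qed
qed

end
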